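(* Let $a(n,k)$ be the number of non-squashing partitions of $n$ into exactly $k$ parts. Then $a(0,0)=1$, $a(n,0)=0$ for $n\ge1$, $a(n,k)=0$ for $k>n$, $a(n,1)=1$ for $n\ge1$, and for $m\ge1,k\ge1$: $$a(2m,k)=a(2m-1,k)+a(m,k-1),\qquad a(2m+1,k)=a(2m,k).$$ For every $k\ge1$, $$\sum_{m\ge0}a(m,k)x^m=\frac{x^{2^{k-1}}}{\prod_{j=0}^{k-1}\left(1-x^{2^j}\right)},$$ and for every $k\ge2$, $$\sum_{m\ge0}a(2m,k)x^m=\frac{x^{2^{k-2}}}{(1-x)\prod_{j=0}^{k-2}\left(1-x^{2^j}\right)}.$$ Consequently, for $k\ge1$, $a(n,k)$ equals the number of partitions of $n-2^{k-1}$ into powers of $2$ not exceeding $2^{k-1}$, and also equals the number of partitions of $n$ into powers of $2$ whose largest part is $2^{k-1}$.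
   Context: A partition $n=p_1+\cdots+p_k$ with $1\le p_1\le\cdots\le p_k$ is non-squashing if $p_1+\cdots+p_j\le p_{j+1}$ for all $1\le j\le k-1$. The empty partition is the unique partition of $0$ and has $0$ parts. *)

theory Defs
  imports "HOL-Computational_Algebra.Formal_Power_Series"
begin

text \<open>A partition is represented as a nondecreasing list of positive parts
  p_1 <= ... <= p_k. It is non-squashing if p_1+...+p_j <= p_(j+1) for 1 <= j <= k-1
  (list indices are 0-based, so p_(j+1) is ps ! j and p_1+...+p_j is sum_list (take j ps)).\<close>

definition non_squashing :: "nat list \<Rightarrow> bool" where
  "non_squashing ps \<longleftrightarrow>
     (\<forall>p\<in>set ps. 1 \<le> p) \<and> sorted ps \<and>
     (\<forall>j. 1 \<le> j \<and> j < length ps \<longrightarrow> sum_list (take j ps) \<le> ps ! j)"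

definition nsq :: "nat \<Rightarrow> nat \<Rightarrow> nat" where
  "nsq n k = card {ps. non_squashing ps \<and> sum_list ps = n \<and> length ps = k}"

definition partitions_with :: "(nat \<Rightarrow> bool) \<Rightarrow> nat \<Rightarrow> nat list set" where
  "partitions_with P n = {ps. sorted ps \<and> (\<forall>p\<in>set ps. 1 \<le> p \<and> P p) \<and> sum_list ps = n}"

end

theory Submission
  imports Defs
begin

text \<open>Removing the largest part of a non-squashing partition of n >= 1 into k + 1 parts
  leaves a non-squashing partition of some s <= n div 2 into k parts, and conversely every
  such partition extends by the part n - s; hence a(n, k + 1) is the sum of a(s, k) over
  s <= n div 2. For k >= 1 this says (1 - x) F_(k+1)(x) = F_k(x^2) for the generating
  functions F_k, while the products P_k(x) = prod_(j<k) (1 - x^(2^j)) satisfy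
  P_(k+1)(x) = (1 - x) P_k(x^2); so F_(k+1) P_(k+1) = x^(2^k) by induction from
  F_1 = x / (1 - x). The even part of F_(k+2) is the sequence of partial sums of F_(k+1).
  Finally 1 / P_k counts partitions into powers of 2 below 2^k (peel off the largest
  allowed part one factor at a time), which gives both combinatorial interpretations.\<close>

section \<open>Removing the largest part\<close>

abbreviation non_squashing_partitions :: "nat \<Rightarrow> nat \<Rightarrow> nat list set" where
  "non_squashing_partitions n k \<equiv> {ps. non_squashing ps \<and> sum_list ps = n \<and> length ps = k}"

lemma non_squashing_snoc:
  "non_squashing (qs @ [x]) \<longleftrightarrow> non_squashing qs \<and> 1 \<le> x \<and> sum_list qs \<le> x"
proof
  assume ns: "non_squashing (qs @ [x])"
  have prefix_bound: "sum_list (take j qs) \<le> qs ! j" if "1 \<le> j" "j < length qs" for j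
  proof -
    have "sum_list (take j (qs @ [x])) \<le> (qs @ [x]) ! j"
      using ns that by (simp add: non_squashing_def)
    then show ?thesis using that by (simp add: nth_append)
  qed
  have last_bound: "sum_list qs \<le> x"
  proof (cases "qs = []")
    case False
    then have "1 \<le> length qs" "length qs < length (qs @ [x])" by (simp_all add: Suc_leI)
    then have "sum_list (take (length qs) (qs @ [x])) \<le> (qs @ [x]) ! length qs"
      using ns unfolding non_squashing_def by blast
    then show ?thesis by simp
  qed simp
  show "non_squashing qs \<and> 1 \<le> x \<and> sum_list qs \<le> x"
    using ns prefix_bound last_bound by (auto simp: non_squashing_def sorted_append)
next
  assume "non_squashing qs \<and> 1 \<le> x \<and> sum_list qs \<le> x"
  then have ns: "non_squashing qs" "1 \<le> x" "sum_list qs \<le> x" by auto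
  have "\<forall>q\<in>set qs. q \<le> x" using ns(3) member_le_sum_list order_trans by blast
  moreover have "sum_list (take j (qs @ [x])) \<le> (qs @ [x]) ! j"
    if "1 \<le> j" "j < length (qs @ [x])" for j
    using ns that by (cases "j < length qs") (auto simp: non_squashing_def nth_append)
  ultimately show "non_squashing (qs @ [x])"
    using ns by (auto simp: non_squashing_def sorted_append)
qed

lemma length_le_sum_list_if_pos: "\<forall>p\<in>set ps. 1 \<le> p \<Longrightarrow> length ps \<le> sum_list (ps :: nat list)"
  by (induction ps) auto

lemma finite_pos_lists_with_sum: "finite {ps :: nat list. (\<forall>p\<in>set ps. 1 \<le> p) \<and> sum_list ps = n}"
proof (rule finite_subset[OF subsetI finite_lists_length_le[OF finite_atMost[of n]]])
  fix ps assume "ps \<in> {ps. (\<forall>p\<in>set ps. 1 \<le> p) \<and> sum_list ps = n}"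
  then show "ps \<in> {ps. set ps \<subseteq> {..n} \<and> length ps \<le> n}"
    using length_le_sum_list_if_pos[of ps] member_le_sum_list[of _ ps] by auto
qed

lemma finite_non_squashing_partitions: "finite (non_squashing_partitions n k)"
  by (rule finite_subset[OF _ finite_pos_lists_with_sum[of n]]) (auto simp: non_squashing_def)

lemma finite_partitions_with: "finite (partitions_with P n)"
  by (rule finite_subset[OF _ finite_pos_lists_with_sum[of n]]) (auto simp: partitions_with_def)

lemma non_squashing_partitions_Suc:
  assumes "n \<ge> 1"
  shows "non_squashing_partitions n (Suc k) =
    (\<lambda>(s, qs). qs @ [n - s]) ` (SIGMA s:{..n div 2}. non_squashing_partitions s k)"
    (is "_ = ?f ` ?S")
proof (intro equalityI subsetI)
  fix ps assume ps: "ps \<in> non_squashing_partitions n (Suc k)"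
  then have "ps \<noteq> []" by auto
  then obtain qs x where ps_eq: "ps = qs @ [x]"
    by (metis append_butlast_last_id)
  with ps have qs: "non_squashing qs" "length qs = k" and "sum_list qs \<le> x" "sum_list qs + x = n"
    by (auto simp: non_squashing_snoc)
  then have "sum_list qs \<le> n div 2" "ps = ?f (sum_list qs, qs)"
    using ps_eq by auto
  moreover have "(sum_list qs, qs) \<in> ?S"
    using qs \<open>sum_list qs \<le> n div 2\<close> by simp
  ultimately show "ps \<in> ?f ` ?S" by blast
next
  fix ps assume "ps \<in> ?f ` ?S"
  then obtain s qs where s: "s \<le> n div 2" and qs: "qs \<in> non_squashing_partitions s k"
    and ps_eq: "ps = qs @ [n - s]"
    by auto
  from s assms have "s \<le> n - s" "1 \<le> n - s" by presburger+
  with qs show "ps \<in> non_squashing_partitions n (Suc k)"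
    unfolding ps_eq by (simp add: non_squashing_snoc)
qed

lemma nsq_Suc: "nsq n (Suc k) = (if n = 0 then 0 else \<Sum>s\<le>n div 2. nsq s k)"
proof (cases "n = 0")
  case True
  have empty: "non_squashing_partitions 0 (Suc k) = {}"
  proof (rule equals0I)
    fix ps assume "ps \<in> non_squashing_partitions 0 (Suc k)"
    then show False by (cases ps) (auto simp: non_squashing_def)
  qed
  show ?thesis unfolding nsq_def True empty by simp
next
  case False
  then have "n \<ge> 1" by simp
  have inj: "inj_on (\<lambda>(s, qs). qs @ [n - s]) (SIGMA s:{..n div 2}. non_squashing_partitions s k)"
    by (auto simp: inj_on_def)
  have "nsq n (Suc k) = card (SIGMA s:{..n div 2}. non_squashing_partitions s k)"
    unfolding nsq_def non_squashing_partitions_Suc[OF \<open>n \<ge> 1\<close>] card_image[OF inj] ..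
  also have "\<dots> = (\<Sum>s\<le>n div 2. nsq s k)"
    by (simp add: card_SigmaI finite_non_squashing_partitions nsq_def)
  finally show ?thesis using False by simp
qed

lemma nsq_0: "nsq n 0 = (if n = 0 then 1 else 0)"
proof -
  have "non_squashing_partitions n 0 = (if n = 0 then {[]} else {})"
    by (auto simp: non_squashing_def)
  then show ?thesis by (simp add: nsq_def)
qed

lemma nsq_1: "nsq n 1 = (if n = 0 then 0 else 1)"
  using nsq_Suc[of n 0] by (simp add: nsq_0)

lemma nsq_eq_0_if_less: "n < k \<Longrightarrow> nsq n k = 0"
proof (induction k arbitrary: n)
  case (Suc k)
  then show ?case by (simp add: nsq_Suc)
qed simp

lemma nsq_Suc_eq_sum: "k \<ge> 1 \<Longrightarrow> nsq n (Suc k) = (\<Sum>s\<le>n div 2. nsq s k)"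
  by (simp add: nsq_Suc nsq_eq_0_if_less)

lemma nsq_double:
  assumes "m \<ge> 1" "k \<ge> 1"
  shows "nsq (2 * m) k = nsq (2 * m - 1) k + nsq m (k - 1)"
proof -
  obtain k' where "k = Suc k'" using assms(2) by (cases k) auto
  moreover have "(2 * m - 1) div 2 = m - 1" using assms(1) by simp
  moreover have "{..m} = insert m {..m - 1}" using assms(1) by auto
  ultimately show ?thesis using assms(1) by (simp add: nsq_Suc)
qed

lemma nsq_Suc_double:
  assumes "m \<ge> 1" "k \<ge> 1"
  shows "nsq (2 * m + 1) k = nsq (2 * m) k"
proof -
  obtain k' where "k = Suc k'" using assms(2) by (cases k) auto
  then show ?thesis using assms(1) by (simp add: nsq_Suc)
qed

section \<open>Generating functions\<close>

lemma fps_compose_X_power_nth: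
  fixes f :: "'a::comm_ring_1 fps"
  assumes "d > 0"
  shows "fps_nth (f oo fps_X ^ d) n = (if d dvd n then fps_nth f (n div d) else 0)"
proof -
  have "fps_nth (f oo fps_X ^ d) n = (\<Sum>i=0..n. if d dvd n \<and> i = n div d then fps_nth f i else 0)"
    unfolding fps_compose_nth power_mult[symmetric]
    using assms by (intro sum.cong) (auto simp: mult.commute)
  also have "\<dots> = (if d dvd n then fps_nth f (n div d) else 0)"
    by (cases "d dvd n") simp_all
  finally show ?thesis .
qed

lemma fps_X_power_compose_X_power:
  "d > 0 \<Longrightarrow> fps_X ^ a oo fps_X ^ d = (fps_X ^ (d * a) :: 'a::comm_ring_1 fps)"
  by (rule fps_ext) (auto simp: fps_compose_X_power_nth)

lemma one_minus_X_mult_partial_sums: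
  fixes f :: "'a::comm_ring_1 fps"
  shows "(1 - fps_X) * Abs_fps (\<lambda>n. \<Sum>i\<le>n. fps_nth f i) = f"
proof (rule fps_ext)
  fix n
  show "fps_nth ((1 - fps_X) * Abs_fps (\<lambda>n. \<Sum>i\<le>n. fps_nth f i)) n = fps_nth f n"
    by (cases n) (simp_all add: algebra_simps)
qed

lemma one_minus_X_mult_half_partial_sums:
  fixes f :: "'a::comm_ring_1 fps"
  shows "(1 - fps_X) * Abs_fps (\<lambda>n. \<Sum>i\<le>n div 2. fps_nth f i) = f oo fps_X ^ 2"
proof (rule fps_ext)
  fix n
  show "fps_nth ((1 - fps_X) * Abs_fps (\<lambda>n. \<Sum>i\<le>n div 2. fps_nth f i)) n = fps_nth (f oo fps_X ^ 2) n"
  proof (cases n)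
    case (Suc m)
    then show ?thesis
      by (cases "even m") (auto simp: algebra_simps fps_compose_X_power_nth elim!: evenE oddE)
  qed (simp add: algebra_simps fps_compose_X_power_nth)
qed

definition nsq_fps :: "nat \<Rightarrow> 'a::comm_ring_1 fps" where
  "nsq_fps k = Abs_fps (\<lambda>n. of_nat (nsq n k))"

definition binary_prod :: "nat \<Rightarrow> 'a::comm_ring_1 fps" where
  "binary_prod k = (\<Prod>j<k. 1 - fps_X ^ 2 ^ j)"

lemma nsq_fps_Suc_Suc:
  "(1 - fps_X) * nsq_fps (Suc (Suc k)) = (nsq_fps (Suc k) oo fps_X ^ 2 :: 'a::comm_ring_1 fps)"
proof -
  have "(nsq_fps (Suc (Suc k)) :: 'a fps) = Abs_fps (\<lambda>n. \<Sum>s\<le>n div 2. fps_nth (nsq_fps (Suc k)) s)"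
    by (simp add: nsq_fps_def nsq_Suc_eq_sum)
  then show ?thesis by (simp only: one_minus_X_mult_half_partial_sums)
qed

lemma binary_prod_nth_0: "fps_nth (binary_prod k) 0 = 1"
  by (induction k) (simp_all add: binary_prod_def)

lemma binary_prod_Suc:
  "binary_prod (Suc k) = (1 - fps_X) * (binary_prod k oo fps_X ^ 2 :: 'a::idom fps)"
proof -
  have "binary_prod (Suc k) = (1 - fps_X) * (\<Prod>j<k. 1 - fps_X ^ 2 ^ Suc j :: 'a fps)"
    unfolding binary_prod_def by (subst prod.lessThan_Suc_shift) (simp del: prod.lessThan_Suc)
  also have "(\<Prod>j<k. 1 - fps_X ^ 2 ^ Suc j) = (binary_prod k oo fps_X ^ 2 :: 'a fps)"
    unfolding binary_prod_def
    by (simp add: fps_compose_prod_distrib fps_compose_sub_distrib fps_X_power_compose_X_power)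
  finally show ?thesis .
qed

lemma nsq_fps_mult_binary_prod:
  "nsq_fps (Suc k) * binary_prod (Suc k) = (fps_X ^ 2 ^ k :: 'a::idom fps)"
proof (induction k)
  case 0
  have "nsq n (Suc 0) = (if n = 0 then 0 else 1)" for n
    using nsq_1 by simp
  then show ?case by (intro fps_ext) (simp add: nsq_fps_def binary_prod_def algebra_simps)
next
  case (Suc k)
  have "nsq_fps (Suc (Suc k)) * binary_prod (Suc (Suc k)) =
      ((1 - fps_X) * nsq_fps (Suc (Suc k))) * (binary_prod (Suc k) oo fps_X ^ 2 :: 'a fps)"
    unfolding binary_prod_Suc[of "Suc k"] by (simp only: mult_ac)
  also have "\<dots> = (nsq_fps (Suc k) * binary_prod (Suc k)) oo fps_X ^ 2"
    by (simp add: nsq_fps_Suc_Suc fps_compose_mult_distrib)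
  also have "\<dots> = fps_X ^ 2 ^ Suc k"
    by (simp add: Suc.IH fps_X_power_compose_X_power)
  finally show ?case .
qed

lemma nsq_generating_function:
  assumes "k \<ge> 1"
  shows "Abs_fps (\<lambda>n. of_nat (nsq n k)) =
    fps_X ^ 2 ^ (k - 1) / (\<Prod>j<k. 1 - fps_X ^ 2 ^ j :: 'a::field fps)"
proof -
  obtain k' where k: "k = Suc k'" using assms by (cases k) auto
  have "binary_prod k \<noteq> (0 :: 'a fps)"
    by (rule fps_nonzeroI[of _ 0]) (simp add: binary_prod_nth_0)
  with nsq_fps_mult_binary_prod[of k'] have "nsq_fps k = fps_X ^ 2 ^ k' / (binary_prod k :: 'a fps)"
    unfolding k by (metis nonzero_mult_div_cancel_right)
  then show ?thesis unfolding nsq_fps_def binary_prod_def k by simp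
qed

lemma nsq_even_generating_function:
  assumes "k \<ge> 2"
  shows "Abs_fps (\<lambda>n. of_nat (nsq (2 * n) k)) =
    fps_X ^ 2 ^ (k - 2) / ((1 - fps_X) * (\<Prod>j<k - 1. 1 - fps_X ^ 2 ^ j) :: 'a::field fps)"
proof -
  obtain k' where k: "k = Suc (Suc k')" using assms by (metis add_2_eq_Suc le_Suc_ex)
  let ?E = "Abs_fps (\<lambda>n. of_nat (nsq (2 * n) k)) :: 'a fps"
  have "?E = Abs_fps (\<lambda>n. \<Sum>s\<le>n. fps_nth (nsq_fps (Suc k')) s)"
    by (simp add: k nsq_fps_def nsq_Suc_eq_sum)
  then have "(1 - fps_X) * ?E = nsq_fps (Suc k')"
    by (simp add: one_minus_X_mult_partial_sums)
  then have "?E * ((1 - fps_X) * binary_prod (Suc k')) = fps_X ^ 2 ^ k'"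
    using nsq_fps_mult_binary_prod[of k'] by (metis mult.assoc mult.commute)
  moreover have "(1 - fps_X) * binary_prod (Suc k') \<noteq> (0 :: 'a fps)"
    by (rule fps_nonzeroI[of _ 0]) (simp add: binary_prod_nth_0)
  ultimately have "?E = fps_X ^ 2 ^ k' / ((1 - fps_X) * binary_prod (Suc k'))"
    by (metis nonzero_mult_div_cancel_right)
  then show ?thesis unfolding binary_prod_def k by simp
qed

section \<open>Partitions into powers of 2\<close>

lemma partitions_with_last_eq_image:
  assumes "1 \<le> v" "P v"
  shows "{ps \<in> partitions_with P n. ps \<noteq> [] \<and> last ps = v} =
    (if v \<le> n then (\<lambda>qs. qs @ [v]) ` partitions_with (\<lambda>p. P p \<and> p \<le> v) (n - v) else {})"
proof (intro equalityI subsetI)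
  fix ps assume ps: "ps \<in> {ps \<in> partitions_with P n. ps \<noteq> [] \<and> last ps = v}"
  then obtain qs where ps_eq: "ps = qs @ [v]"
    by (metis (mono_tags, lifting) append_butlast_last_id mem_Collect_eq)
  with ps have "v \<le> n" "qs \<in> partitions_with (\<lambda>p. P p \<and> p \<le> v) (n - v)"
    by (auto simp: partitions_with_def sorted_append)
  with ps_eq show "ps \<in> (if v \<le> n then (\<lambda>qs. qs @ [v]) ` partitions_with (\<lambda>p. P p \<and> p \<le> v) (n - v) else {})"
    by simp
qed (use assms in \<open>auto simp: partitions_with_def sorted_append split: if_splits\<close>)

lemma card_partitions_with_last:
  assumes "1 \<le> v" "P v"
  shows "card {ps \<in> partitions_with P n. ps \<noteq> [] \<and> last ps = v} =
    (if v \<le> n then card (partitions_with (\<lambda>p. P p \<and> p \<le> v) (n - v)) else 0)"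
  unfolding partitions_with_last_eq_image[of v P n, OF assms] by (simp add: card_image inj_on_def)

lemma partitions_with_split_max:
  assumes "\<And>p. P p \<Longrightarrow> p \<le> v"
  shows "partitions_with P n =
    partitions_with (\<lambda>p. P p \<and> p \<noteq> v) n \<union> {ps \<in> partitions_with P n. ps \<noteq> [] \<and> last ps = v}"
proof (intro equalityI subsetI)
  fix ps assume ps: "ps \<in> partitions_with P n"
  show "ps \<in> partitions_with (\<lambda>p. P p \<and> p \<noteq> v) n \<union> {ps \<in> partitions_with P n. ps \<noteq> [] \<and> last ps = v}"
  proof (cases "v \<in> set ps")
    case True
    then obtain qs x where ps_eq: "ps = qs @ [x]"
      by (metis append_butlast_last_id empty_iff list.set(1))
    have "v \<le> x" using ps True unfolding ps_eq partitions_with_def by (auto simp: sorted_append)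
    moreover have "x \<le> v" using ps assms unfolding ps_eq partitions_with_def by auto
    ultimately show ?thesis using ps ps_eq by simp
  next
    case False
    then show ?thesis using ps by (auto simp: partitions_with_def)
  qed
qed (auto simp: partitions_with_def)

lemma card_partitions_with_split_max:
  assumes "1 \<le> v" "P v" "\<And>p. P p \<Longrightarrow> p \<le> v"
  shows "card (partitions_with P n) =
    card (partitions_with (\<lambda>p. P p \<and> p \<noteq> v) n) +
    (if v \<le> n then card (partitions_with P (n - v)) else 0)"
proof -
  let ?L = "{ps \<in> partitions_with P n. ps \<noteq> [] \<and> last ps = v}"
  have fin: "finite ?L" by (rule finite_subset[OF _ finite_partitions_with]) auto
  have le_conj_eq: "(\<lambda>p. P p \<and> p \<le> v) = P" using assms(3) by auto
  have disj: "partitions_with (\<lambda>p. P p \<and> p \<noteq> v) n \<inter> ?L = {}"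
    using last_in_set by (fastforce simp: partitions_with_def)
  have "card (partitions_with P n) = card (partitions_with (\<lambda>p. P p \<and> p \<noteq> v) n \<union> ?L)"
    using partitions_with_split_max[of P v n, OF assms(3)] by (rule arg_cong)
  also have "\<dots> = card (partitions_with (\<lambda>p. P p \<and> p \<noteq> v) n) + card ?L"
    by (rule card_Un_disjoint[OF finite_partitions_with fin disj])
  also have "card ?L = (if v \<le> n then card (partitions_with P (n - v)) else 0)"
    using card_partitions_with_last[of v P n, OF assms(1,2)] assms(3) by (simp add: le_conj_eq)
  finally show ?thesis .
qed

definition partition_fps :: "(nat \<Rightarrow> bool) \<Rightarrow> 'a::comm_ring_1 fps" where
  "partition_fps P = Abs_fps (\<lambda>n. of_nat (card (partitions_with P n)))"

lemma partition_fps_mult_one_minus_X_power: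
  assumes "1 \<le> v" "P v" "\<And>p. P p \<Longrightarrow> p \<le> v"
  shows "partition_fps P * (1 - fps_X ^ v) = (partition_fps (\<lambda>p. P p \<and> p \<noteq> v) :: 'a::comm_ring_1 fps)"
proof (rule fps_ext)
  fix n
  show "fps_nth (partition_fps P * (1 - fps_X ^ v)) n = fps_nth (partition_fps (\<lambda>p. P p \<and> p \<noteq> v) :: 'a fps) n"
    using card_partitions_with_split_max[of v P n, OF assms]
    by (simp add: partition_fps_def algebra_simps fps_X_power_mult_nth)
qed

lemma partition_fps_False: "partition_fps (\<lambda>_. False) = 1"
proof (rule fps_ext)
  fix n
  have "partitions_with (\<lambda>_. False) n = (if n = 0 then {[]} else {})"
    by (auto simp: partitions_with_def)
  then show "fps_nth (partition_fps (\<lambda>_. False)) n = fps_nth 1 n"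
    by (simp add: partition_fps_def)
qed

lemma binary_partition_fps_mult_binary_prod:
  "partition_fps (\<lambda>p. \<exists>j<k. p = 2 ^ j) * binary_prod k = (1 :: 'a::comm_ring_1 fps)"
proof (induction k)
  case 0
  show ?case by (simp add: binary_prod_def partition_fps_False)
next
  case (Suc k)
  have "partition_fps (\<lambda>p. \<exists>j<Suc k. p = 2 ^ j) * (1 - fps_X ^ 2 ^ k) =
      (partition_fps (\<lambda>p. (\<exists>j<Suc k. p = 2 ^ j) \<and> p \<noteq> 2 ^ k) :: 'a fps)"
    by (rule partition_fps_mult_one_minus_X_power) auto
  also have "(\<lambda>p. (\<exists>j<Suc k. p = 2 ^ j) \<and> p \<noteq> 2 ^ k) = (\<lambda>p. \<exists>j<k. p = (2::nat) ^ j)"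
    by (auto simp: less_Suc_eq)
  finally have "partition_fps (\<lambda>p. \<exists>j<Suc k. p = 2 ^ j) * (1 - fps_X ^ 2 ^ k) * binary_prod k =
      (1 :: 'a fps)"
    using Suc.IH by simp
  then show ?case by (simp add: binary_prod_def mult_ac)
qed

lemma nsq_eq_card_binary_partitions:
  assumes "k \<ge> 1"
  shows "nsq n k = (if n < 2 ^ (k - 1) then 0
    else card (partitions_with (\<lambda>p. \<exists>j\<le>k - 1. p = 2 ^ j) (n - 2 ^ (k - 1))))"
proof -
  obtain k' where k: "k = Suc k'" using assms by (cases k) auto
  let ?B = "partition_fps (\<lambda>p. \<exists>j<Suc k'. p = 2 ^ j) :: int fps"
  have "nsq_fps (Suc k') = nsq_fps (Suc k') * (binary_prod (Suc k') * ?B)"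
    using binary_partition_fps_mult_binary_prod[of "Suc k'", where 'a = int] by (simp add: mult.commute)
  also have "\<dots> = fps_X ^ 2 ^ k' * ?B"
    by (simp add: mult.assoc[symmetric] nsq_fps_mult_binary_prod)
  finally have "fps_nth (nsq_fps (Suc k')) n = fps_nth (fps_X ^ 2 ^ k' * ?B) n" by simp
  then have "int (nsq n (Suc k')) = (if n < 2 ^ k' then 0
      else int (card (partitions_with (\<lambda>p. \<exists>j<Suc k'. p = 2 ^ j) (n - 2 ^ k'))))"
    unfolding nsq_fps_def partition_fps_def fps_X_power_mult_nth fps_nth_Abs_fps .
  moreover have "(\<lambda>p. \<exists>j<Suc k'. p = 2 ^ j) = (\<lambda>p. \<exists>j\<le>k'. p = (2::nat) ^ j)"
    by (simp add: less_Suc_eq_le)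
  ultimately show ?thesis
    by (simp add: k split: if_splits)
qed

lemma nsq_eq_card_binary_partitions_largest_part:
  assumes "k \<ge> 1"
  shows "nsq n k = card {ps \<in> partitions_with (\<lambda>p. \<exists>j. p = 2 ^ j) n. ps \<noteq> [] \<and> last ps = 2 ^ (k - 1)}"
proof -
  have "(\<lambda>p. (\<exists>j. p = 2 ^ j) \<and> p \<le> 2 ^ (k - 1)) = (\<lambda>p. \<exists>j\<le>k - 1. p = (2::nat) ^ j)"
    by auto
  then show ?thesis
    using card_partitions_with_last[of "2 ^ (k - 1)" "\<lambda>p. \<exists>j. p = 2 ^ j" n]
    by (simp add: nsq_eq_card_binary_partitions[OF assms] not_less)
qed

theorem theorem3:
  shows "nsq 0 0 = 1
    \<and> (\<forall>n\<ge>1. nsq n 0 = 0)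
    \<and> (\<forall>n k. k > n \<longrightarrow> nsq n k = 0)
    \<and> (\<forall>n\<ge>1. nsq n 1 = 1)
    \<and> (\<forall>m\<ge>1. \<forall>k\<ge>1. nsq (2*m) k = nsq (2*m - 1) k + nsq m (k - 1))
    \<and> (\<forall>m\<ge>1. \<forall>k\<ge>1. nsq (2*m + 1) k = nsq (2*m) k)
    \<and> (\<forall>k\<ge>1.
           Abs_fps (\<lambda>m. real (nsq m k)) =
           fps_X ^ (2 ^ (k - 1)) / (\<Prod>j<k. (1 - fps_X ^ (2 ^ j))))
    \<and> (\<forall>k\<ge>2.
           Abs_fps (\<lambda>m. real (nsq (2*m) k)) =
           fps_X ^ (2 ^ (k - 2)) / ((1 - fps_X) * (\<Prod>j<k - 1. (1 - fps_X ^ (2 ^ j)))))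
    \<and> (\<forall>n. \<forall>k\<ge>1.
           nsq n k = (if n < 2 ^ (k - 1) then 0
                      else card (partitions_with (\<lambda>p. \<exists>j\<le>k - 1. p = 2 ^ j) (n - 2 ^ (k - 1)))))
    \<and> (\<forall>n. \<forall>k\<ge>1.
           nsq n k = card {ps \<in> partitions_with (\<lambda>p. \<exists>j. p = 2 ^ j) n.
                             ps \<noteq> [] \<and> last ps = 2 ^ (k - 1)})"
proof (intro conjI allI impI)
  fix n m k :: nat
  show "nsq 0 0 = 1" by (simp add: nsq_0)
  show "n \<ge> 1 \<Longrightarrow> nsq n 0 = 0" by (simp add: nsq_0)
  show "k > n \<Longrightarrow> nsq n k = 0" by (rule nsq_eq_0_if_less)
  show "n \<ge> 1 \<Longrightarrow> nsq n 1 = 1" using nsq_1[of n] by simp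
  show "m \<ge> 1 \<Longrightarrow> k \<ge> 1 \<Longrightarrow> nsq (2*m) k = nsq (2*m - 1) k + nsq m (k - 1)"
    by (rule nsq_double)
  show "m \<ge> 1 \<Longrightarrow> k \<ge> 1 \<Longrightarrow> nsq (2*m + 1) k = nsq (2*m) k"
    by (rule nsq_Suc_double)
  show "k \<ge> 1 \<Longrightarrow> Abs_fps (\<lambda>m. real (nsq m k)) =
      fps_X ^ (2 ^ (k - 1)) / (\<Prod>j<k. (1 - fps_X ^ (2 ^ j)))"
    by (rule nsq_generating_function)
  show "k \<ge> 2 \<Longrightarrow> Abs_fps (\<lambda>m. real (nsq (2*m) k)) =
      fps_X ^ (2 ^ (k - 2)) / ((1 - fps_X) * (\<Prod>j<k - 1. (1 - fps_X ^ (2 ^ j))))"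
    by (rule nsq_even_generating_function)
  show "k \<ge> 1 \<Longrightarrow> nsq n k = (if n < 2 ^ (k - 1) then 0
      else card (partitions_with (\<lambda>p. \<exists>j\<le>k - 1. p = 2 ^ j) (n - 2 ^ (k - 1))))"
    by (rule nsq_eq_card_binary_partitions)
  show "k \<ge> 1 \<Longrightarrow> nsq n k = card {ps \<in> partitions_with (\<lambda>p. \<exists>j. p = 2 ^ j) n.
      ps \<noteq> [] \<and> last ps = 2 ^ (k - 1)}"
    by (rule nsq_eq_card_binary_partitions_largest_part)
qed

end
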